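(* For every $k=1,\dots,t$, every $j$ with $0\le j<\deg P^{(k)}_2$, and every $\tau=0,\dots,j$, $$\big|\bar N^{(k,j)}_\tau(F,G)\big|=(\bar R_{k-1})^{b_{k,j}}\,r_{k,j}\,\big|N^{(j)}_\tau\big(P^{(k)}_1,P^{(k)}_2\big)\big|.$$
   Context: Let $K$ be a field of characteristic zero; $|M|$ denotes the determinant of a square matrix $M$; $\mathrm{lc}$ and $\deg$ denote leading coefficient and degree. Subresultant matrices. Let $A=a_px^p+\dots+a_0$, $B=b_qx^q+\dots+b_0$ over $K$ with formal degrees $p\ge q>0$. For $0\le j<q$, $N^{(j)}(A,B)$ is the $(p+q-j)\times(p+q-2j)$ matrix whose $c$-th column ($c=1,\dots,q-j$) has $a_p,\dots,a_0$ in rows $c,\dots,c+p$ and zeros elsewhere, and whose $(q-j+c)$-th column ($c=1,\dots,p-j$) has $b_q,\dots,b_0$ in rows $c,\dots,c+q$ and zeros elsewhere. For $\tau=0,\dots,j$, $N^{(j)}_\tau(A,B)$ is the square submatrix formed by the top $p+q-2j-1$ rows and the $(p+q-j-\tau)$-th row. For $P^{(k)}_1,P^{(k)}_2$ the actual degrees are used. PRS. For nonzero $A,B\in K[x]$, $\deg A>\deg B$, a PRS is $(P_1,\dots,P_l)$, nonzero polynomials, $P_1=A$, $P_2=B$, $\deg P_{i-1}>\deg P_i$, $\alpha_iP_{i-2}=q_{i-1}P_{i-1}+\beta_iP_i$ ($i=3,\dots,l$) with $\alpha_i,\beta_i\in K\setminus\{0\}$, $q_{i-1}\in K[x]$, and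 $P_l=\gamma\gcd(A,B)$, $0\ne\gamma\in K$. Recursive PRS. $F=f_mx^m+\dots+f_0$, $G=g_nx^n+\dots+g_0\in K[x]$, $f_mg_n\ne0$, $m>n>0$. A complete recursive PRS consists of PRSs $(P^{(k)}_1,\dots,P^{(k)}_{l_k})$ with division rules $(\alpha^{(k)}_i,\beta^{(k)}_i)$, $k=1,\dots,t$, $P^{(1)}_1=F$, $P^{(1)}_2=G$, for $k\ge2$ $P^{(k)}_1=P^{(k-1)}_{l_{k-1}}$, $P^{(k)}_2=\frac d{dx}P^{(k)}_1$; $P^{(k)}_{l_k}$ non-constant for $k<t$, $P^{(t)}_{l_t}$ constant. Assume $l_k\ge 3$ for $k<t$. Notation: $n^{(k)}_i=\deg P^{(k)}_i$, $c^{(k)}_i=\mathrm{lc}(P^{(k)}_i)$, $d^{(k)}_i=n^{(k)}_i-n^{(k)}_{i+1}$, $j_0=m$, $j_k=n^{(k)}_{l_k}$. Recursive subresultant matrices $\bar N^{(k,j)}$ ($0\le j<n^{(k)}_2$): $\bar N^{(1,j)}=N^{(j)}(F,G)$; for $k\ge2$, with $\bar N=\bar N^{(k-1,j_{k-1})}$ having $C$ columns, $\bar N_U$ = $\bar N$ minus its bottom $j_{k-1}+1$ rows, $\bar N_L$ = its bottom $j_{k-1}+1$ rows, $\bar N'_L$ = the $j_{k-1}\times C$ matrix whose $i$-th row is $(j_{k-1}+1-i)$ times row $i$ of $\bar N_L$, and $b=2j_{k-1}-2j-1$, $e=j_{k-1}-j-1$: $\bar N^{(k,j)}$ has $bC$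 columns in $b$ blocks of width $C$, upper part $\mathrm{diag}(\bar N_U,\dots,\bar N_U)$ ($b$ copies), and a lower part of $2j_{k-1}-j-1$ rows in which column block $s$ ($s=1,\dots,e$) holds $\bar N_L$ in lower rows $s,\dots,s+j_{k-1}$ and column block $e+s$ ($s=1,\dots,j_{k-1}-j$) holds $\bar N'_L$ in lower rows $s,\dots,s+j_{k-1}-1$; other entries $0$. If $\bar N^{(k,j)}$ has $D$ columns, $\bar N^{(k,j)}_\tau$ is the square submatrix formed by its top $D-1$ rows and its $(D+j-\tau)$-th row. Constants. For $k=1,\dots,t-1$: $B_k=(c^{(k)}_{l_k})^{d^{(k)}_{l_k-1}-1}\prod_{l=3}^{l_k}\{(\beta^{(k)}_l/\alpha^{(k)}_l)^{n^{(k)}_{l-1}-n^{(k)}_{l_k}}(c^{(k)}_{l-1})^{d^{(k)}_{l-2}+d^{(k)}_{l-1}}(-1)^{(n^{(k)}_{l-2}-n^{(k)}_{l_k})(n^{(k)}_{l-1}-n^{(k)}_{l_k})}\}$. For $k\ge2$: $b_{k,j}=2j_{k-1}-2j-1$, $u_{k,j}=(m+n-2j_1)\{\prod_{l=2}^{k-1}(2j_{l-1}-2j_l-1)\}b_{k,j}$, $r_{k,j}=(-1)^{(u_{k-1}-1)(1+2+\dots+(b_{k,j}-1))}$; $b_{1,j}=r_{1,j}=1$, $u_1=m+n-2j_1$; $b_k=b_{k,j_k}$, $u_k=u_{k,j_k}$, $r_k=r_{k,j_k}$; $\bar R_0=1$, $\bar R_k=(\bar R_{k-1})^{b_k}r_kB_k$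 ($k=1,\dots,t-1$). *)

theory Defs
  imports "Jordan_Normal_Form.Determinant" "HOL-Computational_Algebra.Polynomial_Factorial" "HOL-Computational_Algebra.Euclidean_Algorithm"
begin

(* All matrix indices below are 0-based (JNF convention); the paper's 1-based
   row/column r corresponds to index r-1. *)

text \<open>Subresultant matrix N^(j)(A,B) for formal degrees p, q:
 (p+q-j) x (p+q-2j); column c (c < q-j) carries a_p..a_0 in rows c..c+p,
 column q-j+c (c < p-j) carries b_q..b_0 in rows c..c+q.\<close>
definition sres_mat :: "nat \<Rightarrow> nat \<Rightarrow> 'a::zero poly \<Rightarrow> 'a poly \<Rightarrow> nat \<Rightarrow> 'a mat" where
  "sres_mat p q A B j = mat (p + q - j) (p + q - 2 * j) (\<lambda>(r, c).
     if c < q - j then (if c \<le> r \<and> r - c \<le> p then coeff A (p - (r - c)) else 0)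
     else (let c' = c - (q - j) in
           if c' \<le> r \<and> r - c' \<le> q then coeff B (q - (r - c')) else 0))"

definition tau_sub :: "'a mat \<Rightarrow> nat \<Rightarrow> nat \<Rightarrow> 'a mat" where
  "tau_sub M D ri = mat D D (\<lambda>(r, c). if r < D - 1 then M $$ (r, c) else M $$ (ri, c))"

text \<open>N^(j)_tau(A,B) with the actual degrees p = deg A, q = deg B: top p+q-2j-1 rows
 and the (p+q-j-tau)-th row (1-based).\<close>
definition sres_tau :: "'a::zero poly \<Rightarrow> 'a poly \<Rightarrow> nat \<Rightarrow> nat \<Rightarrow> 'a mat" where
  "sres_tau A B j \<tau> = (let p = degree A; q = degree B in
     tau_sub (sres_mat p q A B j) (p + q - 2 * j) (p + q - j - \<tau> - 1))"

text \<open>One recursion step: from Nbar = Nbar^(k-1, J) (J = j_{k-1}) build Nbar^(k,j).\<close>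
definition rec_block :: "'a::comm_ring_1 mat \<Rightarrow> nat \<Rightarrow> nat \<Rightarrow> 'a mat" where
  "rec_block M J j = (let C = dim_col M; R = dim_row M; U = R - (J + 1);
      b = 2 * J - 2 * j - 1; e = J - j - 1 in
    mat (b * U + (2 * J - j - 1)) (b * C) (\<lambda>(r, c).
      let s = c div C; cc = c mod C in
      if r < b * U then
        (if s = r div U then M $$ (r mod U, cc) else 0)
      else (let r' = r - b * U in
        if s < e then
          (if s \<le> r' \<and> r' - s \<le> J then M $$ (U + (r' - s), cc) else 0)
        else (let s' = s - e in
          if s' \<le> r' \<and> r' - s' < J then of_nat (J - (r' - s')) * M $$ (U + (r' - s'), cc)
          else 0))))"

text \<open>Recursive subresultant matrices Nbar^(k,j)(F,G); jj k = j_k. Level k = 0 is unused.\<close>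
fun rsm :: "'a::comm_ring_1 poly \<Rightarrow> 'a poly \<Rightarrow> (nat \<Rightarrow> nat) \<Rightarrow> nat \<Rightarrow> nat \<Rightarrow> 'a mat" where
  "rsm F G jj 0 j = zero_mat 0 0"
| "rsm F G jj (Suc 0) j = sres_mat (degree F) (degree G) F G j"
| "rsm F G jj (Suc (Suc k)) j = rec_block (rsm F G jj (Suc k) (jj (Suc k))) (jj (Suc k)) j"

text \<open>Nbar^(k,j)_tau: top D-1 rows and the (D+j-tau)-th row (1-based), D = number of columns.\<close>
definition rsm_tau :: "'a::comm_ring_1 poly \<Rightarrow> 'a poly \<Rightarrow> (nat \<Rightarrow> nat) \<Rightarrow> nat \<Rightarrow> nat \<Rightarrow> nat \<Rightarrow> 'a mat" where
  "rsm_tau F G jj k j \<tau> = (let M = rsm F G jj k j; D = dim_col M in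
     tau_sub M D (D + j - \<tau> - 1))"

definition is_PRS :: "'a::field_gcd poly \<Rightarrow> 'a poly \<Rightarrow> (nat \<Rightarrow> 'a poly) \<Rightarrow> nat \<Rightarrow> (nat \<Rightarrow> 'a) \<Rightarrow> (nat \<Rightarrow> 'a) \<Rightarrow> bool" where
  "is_PRS A B P l \<alpha> \<beta> \<longleftrightarrow>
     A \<noteq> 0 \<and> B \<noteq> 0 \<and> degree A > degree B \<and>
     2 \<le> l \<and> P 1 = A \<and> P 2 = B \<and>
     (\<forall>i\<in>{1..l}. P i \<noteq> 0) \<and>
     (\<forall>i\<in>{2..l}. degree (P (i - 1)) > degree (P i)) \<and>
     (\<forall>i\<in>{3..l}. \<alpha> i \<noteq> 0 \<and> \<beta> i \<noteq> 0 \<and>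
        (\<exists>q. smult (\<alpha> i) (P (i - 2)) = q * P (i - 1) + smult (\<beta> i) (P i))) \<and>
     (\<exists>\<gamma>. \<gamma> \<noteq> 0 \<and> P l = smult \<gamma> (gcd A B))"

definition is_complete_recursive_PRS ::
  "'a::field_gcd poly \<Rightarrow> 'a poly \<Rightarrow> nat \<Rightarrow> (nat \<Rightarrow> nat \<Rightarrow> 'a poly) \<Rightarrow> (nat \<Rightarrow> nat)
    \<Rightarrow> (nat \<Rightarrow> nat \<Rightarrow> 'a) \<Rightarrow> (nat \<Rightarrow> nat \<Rightarrow> 'a) \<Rightarrow> bool" where
  "is_complete_recursive_PRS F G t P l \<alpha> \<beta> \<longleftrightarrow>
     1 \<le> t \<and>
     (\<forall>k\<in>{1..t}. is_PRS (P k 1) (P k 2) (P k) (l k) (\<alpha> k) (\<beta> k)) \<and>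
     P 1 1 = F \<and> P 1 2 = G \<and>
     (\<forall>k\<in>{2..t}. P k 1 = P (k - 1) (l (k - 1)) \<and> P k 2 = pderiv (P k 1)) \<and>
     (\<forall>k\<in>{1..<t}. degree (P k (l k)) > 0) \<and>
     degree (P t (l t)) = 0"

text \<open>j_k = deg P^(k)_{l_k} for k \<ge> 1, j_0 = m = deg F.\<close>
definition jseq :: "'a::zero poly \<Rightarrow> (nat \<Rightarrow> nat \<Rightarrow> 'a poly) \<Rightarrow> (nat \<Rightarrow> nat) \<Rightarrow> nat \<Rightarrow> nat" where
  "jseq F P l k = (if k = 0 then degree F else degree (P k (l k)))"

definition Bconst :: "(nat \<Rightarrow> nat \<Rightarrow> 'a::field_gcd poly) \<Rightarrow> (nat \<Rightarrow> nat) \<Rightarrow> (nat \<Rightarrow> nat \<Rightarrow> 'a)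
    \<Rightarrow> (nat \<Rightarrow> nat \<Rightarrow> 'a) \<Rightarrow> nat \<Rightarrow> 'a" where
  "Bconst P l \<alpha> \<beta> k = (let n = (\<lambda>i. degree (P k i)); c = (\<lambda>i. lead_coeff (P k i));
      d = (\<lambda>i. n i - n (i + 1)); L = l k in
     c L ^ (d (L - 1) - 1) *
     (\<Prod>i\<in>{3..L}. (\<beta> k i / \<alpha> k i) ^ (n (i - 1) - n L) *
        c (i - 1) ^ (d (i - 2) + d (i - 1)) *
        (-1) ^ ((n (i - 2) - n L) * (n (i - 1) - n L))))"

definition bkj :: "'a::zero poly \<Rightarrow> (nat \<Rightarrow> nat \<Rightarrow> 'a poly) \<Rightarrow> (nat \<Rightarrow> nat) \<Rightarrow> nat \<Rightarrow> nat \<Rightarrow> nat" where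
  "bkj F P l k j = (if k = 1 then 1 else 2 * jseq F P l (k - 1) - 2 * j - 1)"

definition ukj :: "'a::zero poly \<Rightarrow> 'a poly \<Rightarrow> (nat \<Rightarrow> nat \<Rightarrow> 'a poly) \<Rightarrow> (nat \<Rightarrow> nat) \<Rightarrow> nat \<Rightarrow> nat \<Rightarrow> nat" where
  "ukj F G P l k j = (degree F + degree G - 2 * jseq F P l 1) *
     (\<Prod>i\<in>{2..k-1}. 2 * jseq F P l (i - 1) - 2 * jseq F P l i - 1) * bkj F P l k j"

definition uk :: "'a::zero poly \<Rightarrow> 'a poly \<Rightarrow> (nat \<Rightarrow> nat \<Rightarrow> 'a poly) \<Rightarrow> (nat \<Rightarrow> nat) \<Rightarrow> nat \<Rightarrow> nat" where
  "uk F G P l k = (if k = 1 then degree F + degree G - 2 * jseq F P l 1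
                   else ukj F G P l k (jseq F P l k))"

definition rkj :: "'a::field_gcd poly \<Rightarrow> 'a poly \<Rightarrow> (nat \<Rightarrow> nat \<Rightarrow> 'a poly) \<Rightarrow> (nat \<Rightarrow> nat) \<Rightarrow> nat \<Rightarrow> nat \<Rightarrow> 'a" where
  "rkj F G P l k j = (if k = 1 then 1 else
     (-1) ^ ((uk F G P l (k - 1) - 1) * (\<Sum>i\<in>{1..<bkj F P l k j}. i)))"

fun Rbar :: "'a::field_gcd poly \<Rightarrow> 'a poly \<Rightarrow> (nat \<Rightarrow> nat \<Rightarrow> 'a poly) \<Rightarrow> (nat \<Rightarrow> nat)
    \<Rightarrow> (nat \<Rightarrow> nat \<Rightarrow> 'a) \<Rightarrow> (nat \<Rightarrow> nat \<Rightarrow> 'a) \<Rightarrow> nat \<Rightarrow> 'a" where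
  "Rbar F G P l \<alpha> \<beta> 0 = 1"
| "Rbar F G P l \<alpha> \<beta> (Suc k) =
     Rbar F G P l \<alpha> \<beta> k ^ bkj F P l (Suc k) (jseq F P l (Suc k)) *
     rkj F G P l (Suc k) (jseq F P l (Suc k)) * Bconst P l \<alpha> \<beta> (Suc k)"

end

theory Submission
  imports Defs "Subresultants.Subresultant"
begin

(* The proof is an induction on the level k of the recursive PRS.  At level 1 the recursive
   subresultant matrix is the ordinary one.  Passing from level k to level k+1, the matrix
   Nbar^(k+1,j) consists of b copies of the top part of M = Nbar^(k,j_k) placed block-diagonally,
   on top of rows built from the bottom j_k + 1 rows of M.  Its determinant is reduced, up to the
   sign r_(k+1,j), to a b x b determinant whose entries are minors of M; by the induction
   hypothesis and the fundamental theorem of PRSs these minors are the coefficients of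
   Rbar_k P^(k+1)_1, so the b x b matrix is the subresultant matrix of Rbar_k P^(k+1)_1 and its
   derivative, and the factor Rbar_k^b comes out. *)

lemma strict_mono_on_onto_id:
  fixes f :: "nat \<Rightarrow> nat"
  assumes mono: "strict_mono_on {..<n} f" and onto: "f ` {..<n} = {..<n}" and c: "c < n"
  shows "f c = c"
  using c
proof (induction c rule: less_induct)
  case (less c)
  have inj: "inj_on f {..<n}" using mono strict_mono_on_imp_inj_on by blast
  have "f c \<notin> {..<c}"
  proof
    assume "f c \<in> {..<c}"
    then have ffc: "f (f c) = f c" using less by auto
    have "f c = c"
      by (rule inj_onD[OF inj ffc]) (use less \<open>f c \<in> {..<c}\<close> in auto)
    then show False using \<open>f c \<in> {..<c}\<close> by simp
  qed
  moreover obtain c' where c': "c' < n" "f c' = c" using onto less.prems by (metis imageE lessThan_iff)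
  moreover have "\<not> c' < c" using less.IH c' by fastforce
  moreover have "\<not> c < c'" using mono c' less.prems calculation(1)
    by (metis lessThan_iff not_less strict_mono_onD)
  ultimately show ?case by auto
qed

lemma strict_mono_on_delete_index:
  fixes f :: "nat \<Rightarrow> nat"
  assumes f: "strict_mono_on A f" and s: "s \<notin> f ` A"
  shows "strict_mono_on A (\<lambda>x. delete_index s (f x))"
proof (rule strict_mono_onI)
  fix x y assume "x \<in> A" "y \<in> A" "x < y"
  then have "f x < f y" "f x \<noteq> s" "f y \<noteq> s" using strict_mono_onD[OF f] s by auto
  then show "delete_index s (f x) < delete_index s (f y)" unfolding delete_index_def by auto
qed

lemma delete_index_image:
  assumes "s < Suc N"
  shows "delete_index s ` ({..<Suc N} - {s}) = {..<N}"
proof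
  show "{..<N} \<subseteq> delete_index s ` ({..<Suc N} - {s})"
  proof
    fix x assume "x \<in> {..<N}"
    then have "insert_index s x \<in> {..<Suc N} - {s}" unfolding insert_index_def by auto
    then show "x \<in> delete_index s ` ({..<Suc N} - {s})" by (metis delete_insert_index imageI)
  qed
qed (use assms in \<open>auto simp: delete_index_def\<close>)

(* Index bookkeeping for eliminating the first unit row: if the row positions sigma and the
   remaining column positions kappa partition {..<Suc m + n} monotonically, then after deleting
   column sigma 0 (renumbering with delete_index) the shifted maps partition {..<m + n}. *)
lemma delete_index_split:
  fixes \<sigma> \<kappa> :: "nat \<Rightarrow> nat"
  assumes \<sigma>: "strict_mono_on {..<Suc m} \<sigma>" and \<kappa>: "strict_mono_on {..<n} \<kappa>"
    and disj: "\<sigma> ` {..<Suc m} \<inter> \<kappa> ` {..<n} = {}"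
    and cover: "\<sigma> ` {..<Suc m} \<union> \<kappa> ` {..<n} = {..<Suc m + n}"
  defines "\<sigma>' \<equiv> \<lambda>r. delete_index (\<sigma> 0) (\<sigma> (Suc r))" and "\<kappa>' \<equiv> \<lambda>t. delete_index (\<sigma> 0) (\<kappa> t)"
  shows "strict_mono_on {..<m} \<sigma>'" "strict_mono_on {..<n} \<kappa>'"
    "\<sigma>' ` {..<m} \<inter> \<kappa>' ` {..<n} = {}" "\<sigma>' ` {..<m} \<union> \<kappa>' ` {..<n} = {..<m + n}"
proof -
  define s where "s = \<sigma> 0"
  have \<sigma>s: "s < \<sigma> (Suc r)" if "r < m" for r
    using \<sigma> that unfolding s_def by (auto intro: strict_mono_onD)
  have \<kappa>s: "\<kappa> t \<noteq> s" if "t < n" for t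
    using disj that unfolding s_def by auto
  have "strict_mono_on {..<m} (\<lambda>r. \<sigma> (Suc r))"
    using \<sigma> by (auto intro!: strict_mono_onI dest: strict_mono_onD)
  then show "strict_mono_on {..<m} \<sigma>'"
    unfolding \<sigma>'_def s_def[symmetric] by (rule strict_mono_on_delete_index) (use \<sigma>s in force)
  show "strict_mono_on {..<n} \<kappa>'"
    unfolding \<kappa>'_def s_def[symmetric] by (rule strict_mono_on_delete_index[OF \<kappa>]) (use \<kappa>s in force)
  have "\<sigma>' r \<noteq> \<kappa>' t" if "r < m" "t < n" for r t
  proof
    assume "\<sigma>' r = \<kappa>' t"
    then have "\<sigma> (Suc r) = \<kappa> t"
      using insert_delete_index \<sigma>s[OF that(1)] \<kappa>s[OF that(2)] unfolding \<sigma>'_def \<kappa>'_def s_def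
      by (metis less_irrefl)
    then show False using disj that by fastforce
  qed
  then show "\<sigma>' ` {..<m} \<inter> \<kappa>' ` {..<n} = {}" by auto
  have "s \<notin> \<sigma> ` Suc ` {..<m} \<union> \<kappa> ` {..<n}" using \<sigma>s \<kappa>s by fastforce
  moreover have "\<sigma> ` {..<Suc m} = insert s (\<sigma> ` Suc ` {..<m})"
    unfolding s_def lessThan_Suc_eq_insert_0 by auto
  ultimately have "\<sigma> ` Suc ` {..<m} \<union> \<kappa> ` {..<n} = {..<Suc (m + n)} - {s}"
    using cover by auto
  moreover have "s < Suc (m + n)" using cover unfolding s_def by auto
  moreover have "\<sigma>' ` {..<m} = delete_index s ` \<sigma> ` Suc ` {..<m}" "\<kappa>' ` {..<n} = delete_index s ` \<kappa> ` {..<n}"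
    unfolding \<sigma>'_def \<kappa>'_def s_def by auto
  ultimately show "\<sigma>' ` {..<m} \<union> \<kappa>' ` {..<n} = {..<m + n}"
    using delete_index_image by (metis image_Un)
qed

lemma det_unit_row:
  fixes G :: "'a::comm_ring_1 mat"
  assumes G: "G \<in> carrier_mat n n" and r: "r < n" and c: "c < n"
    and row: "\<And>c'. c' < n \<Longrightarrow> G $$ (r, c') = (if c' = c then d else 0)"
  shows "det G = (-1) ^ (r + c) * d * det (mat_delete G r c)"
proof -
  have "det G = (\<Sum>c'<n. G $$ (r, c') * cofactor G r c')"
    by (rule laplace_expansion_row[OF G r])
  also have "\<dots> = (\<Sum>c'<n. if c' = c then d * cofactor G r c else 0)"
    by (rule sum.cong) (auto simp: row)
  also have "\<dots> = d * cofactor G r c" using c by simp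
  finally show ?thesis by (simp add: cofactor_def)
qed

lemma delete_first_unit_row:
  fixes G :: "'a::comm_ring_1 mat" and \<sigma> \<kappa> :: "nat \<Rightarrow> nat"
  assumes G: "G \<in> carrier_mat (Suc m + n) (Suc m + n)"
    and \<sigma>: "strict_mono_on {..<Suc m} \<sigma>" and \<kappa>: "strict_mono_on {..<n} \<kappa>"
    and disj: "\<sigma> ` {..<Suc m} \<inter> \<kappa> ` {..<n} = {}"
    and cover: "\<sigma> ` {..<Suc m} \<union> \<kappa> ` {..<n} = {..<Suc m + n}"
    and rows: "\<And>r c. r < Suc m \<Longrightarrow> c < Suc m + n \<Longrightarrow> G $$ (r, c) = (if c = \<sigma> r then d else 0)"
  defines "\<sigma>' \<equiv> \<lambda>r. delete_index (\<sigma> 0) (\<sigma> (Suc r))" and "\<kappa>' \<equiv> \<lambda>t. delete_index (\<sigma> 0) (\<kappa> t)"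
  shows "\<And>r c. r < m \<Longrightarrow> c < m + n \<Longrightarrow> mat_delete G 0 (\<sigma> 0) $$ (r, c) = (if c = \<sigma>' r then d else 0)"
    and "mat n n (\<lambda>(i, c). mat_delete G 0 (\<sigma> 0) $$ (m + i, \<kappa>' c)) = mat n n (\<lambda>(i, c). G $$ (Suc m + i, \<kappa> c))"
proof -
  define s where "s = \<sigma> 0"
  have G_index: "mat_delete G 0 s $$ (r, c) = G $$ (Suc r, insert_index s c)" if "r < m + n" "c < m + n" for r c
    using that G unfolding mat_delete_def insert_index_def by auto
  show "mat_delete G 0 (\<sigma> 0) $$ (r, c) = (if c = \<sigma>' r then d else 0)" if "r < m" "c < m + n" for r c
  proof -
    have "s < \<sigma> (Suc r)" using \<sigma> that unfolding s_def by (auto intro: strict_mono_onD)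
    then have "(insert_index s c = \<sigma> (Suc r)) = (c = \<sigma>' r)"
      using insert_delete_index[of "\<sigma> (Suc r)"] delete_insert_index[of s c]
      unfolding \<sigma>'_def s_def by fastforce
    moreover have "insert_index s c < Suc m + n" using that(2) unfolding insert_index_def by auto
    ultimately show ?thesis using G_index that rows[of "Suc r" "insert_index s c"] unfolding s_def by auto
  qed
  show "mat n n (\<lambda>(i, c). mat_delete G 0 (\<sigma> 0) $$ (m + i, \<kappa>' c)) = mat n n (\<lambda>(i, c). G $$ (Suc m + i, \<kappa> c))"
  proof (rule eq_matI)
    fix i c assume "i < dim_row (mat n n (\<lambda>(i, c). G $$ (Suc m + i, \<kappa> c)))"
      "c < dim_col (mat n n (\<lambda>(i, c). G $$ (Suc m + i, \<kappa> c)))"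
    then have ic: "i < n" "c < n" by auto
    have "\<kappa> c \<noteq> s" using disj ic unfolding s_def by auto
    moreover have "\<kappa>' c < m + n"
      using delete_index_split(4)[OF \<sigma> \<kappa> disj cover] ic unfolding \<kappa>'_def by auto
    ultimately show "mat n n (\<lambda>(i, c). mat_delete G 0 (\<sigma> 0) $$ (m + i, \<kappa>' c)) $$ (i, c) =
      mat n n (\<lambda>(i, c). G $$ (Suc m + i, \<kappa> c)) $$ (i, c)"
      using ic G_index[of "m + i" "\<kappa>' c"] insert_delete_index unfolding \<kappa>'_def s_def by simp
  qed auto
qed

lemma det_unit_rows:
  fixes G :: "'a::comm_ring_1 mat" and \<sigma> \<kappa> :: "nat \<Rightarrow> nat"
  assumes G: "G \<in> carrier_mat (m + n) (m + n)"
    and \<sigma>: "strict_mono_on {..<m} \<sigma>" and \<kappa>: "strict_mono_on {..<n} \<kappa>"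
    and disj: "\<sigma> ` {..<m} \<inter> \<kappa> ` {..<n} = {}"
    and cover: "\<sigma> ` {..<m} \<union> \<kappa> ` {..<n} = {..<m + n}"
    and rows: "\<And>r c. r < m \<Longrightarrow> c < m + n \<Longrightarrow> G $$ (r, c) = (if c = \<sigma> r then d else 0)"
  shows "det G = (-1) ^ (\<Sum>r<m. \<sigma> r - r) * d ^ m * det (mat n n (\<lambda>(i, c). G $$ (m + i, \<kappa> c)))"
  using assms
proof (induction m arbitrary: G \<sigma> \<kappa>)
  case 0
  have "\<kappa> c = c" if "c < n" for c
    using strict_mono_on_onto_id[OF "0.prems"(3) _ that] "0.prems"(5) by simp
  then have "G = mat n n (\<lambda>(i, c). G $$ (0 + i, \<kappa> c))"
    using "0.prems"(1) by (intro eq_matI) auto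
  then show ?case by simp
next
  case (Suc m G \<sigma> \<kappa>)
  define s where "s = \<sigma> 0"
  define \<sigma>' where "\<sigma>' = (\<lambda>r. delete_index s (\<sigma> (Suc r)))"
  define \<kappa>' where "\<kappa>' = (\<lambda>t. delete_index s (\<kappa> t))"
  note split = delete_index_split[OF Suc.prems(2-5), folded s_def, folded \<sigma>'_def \<kappa>'_def]
  have rows': "mat_delete G 0 s $$ (r, c) = (if c = \<sigma>' r then d else 0)" if "r < m" "c < m + n" for r c
    unfolding s_def \<sigma>'_def
    by (rule delete_first_unit_row(1)[OF Suc.prems(1-5)]) (use Suc.prems(6) that in auto)
  have bottom: "mat n n (\<lambda>(i, c). mat_delete G 0 s $$ (m + i, \<kappa>' c)) =
      mat n n (\<lambda>(i, c). G $$ (Suc m + i, \<kappa> c))"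
    unfolding s_def \<kappa>'_def by (rule delete_first_unit_row(2)[OF Suc.prems(1-5)]) (use Suc.prems(6) in auto)
  have G': "mat_delete G 0 s \<in> carrier_mat (m + n) (m + n)"
    using mat_delete_carrier[OF Suc.prems(1)] by simp
  have s: "s < Suc m + n" using Suc.prems(5) unfolding s_def by auto
  have det_G: "det G = (-1) ^ s * d * det (mat_delete G 0 s)"
    using det_unit_row[OF Suc.prems(1) _ s, of 0 d] Suc.prems(6)[of 0] unfolding s_def by auto
  have "\<sigma>' r - r = \<sigma> (Suc r) - Suc r" if "r < m" for r
    using Suc.prems(2) that unfolding \<sigma>'_def s_def delete_index_def by (auto dest: strict_mono_onD)
  then have sign: "s + (\<Sum>r<m. \<sigma>' r - r) = (\<Sum>r<Suc m. \<sigma> r - r)"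
    unfolding sum.lessThan_Suc_shift s_def by simp
  have "det (mat_delete G 0 s) =
      (-1) ^ (\<Sum>r<m. \<sigma>' r - r) * d ^ m * det (mat n n (\<lambda>(i, c). mat_delete G 0 s $$ (m + i, \<kappa>' c)))"
    by (rule Suc.IH[OF G' split rows'])
  then show ?case
    unfolding det_G bottom sign[symmetric] by (simp add: power_add)
qed

(* The interleaving that occurs for b blocks of width U+1: the first U columns of every block are
   hit by unit rows (row r goes to column r + r div U), the last column t * Suc U + U of every
   block is left over. *)
lemma block_pattern_mono:
  fixes U b :: nat
  shows "strict_mono_on {..<b * U} (\<lambda>r. r + r div U)" "strict_mono_on {..<b} (\<lambda>t. t * Suc U + U)"
    "(\<lambda>r. r + r div U) ` {..<b * U} \<inter> (\<lambda>t. t * Suc U + U) ` {..<b} = {}"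
proof -
  show "strict_mono_on {..<b * U} (\<lambda>r. r + r div U)"
    by (rule strict_mono_onI) (simp add: add_less_le_mono div_le_mono)
  show "strict_mono_on {..<b} (\<lambda>t. t * Suc U + U)"
    by (rule strict_mono_onI, rule add_less_mono1, rule mult_less_mono1) auto
  have "r + r div U \<noteq> t * Suc U + U" if "r < b * U" for r t
  proof -
    have U: "0 < U" using that by (cases U) auto
    have "r + r div U = r div U * Suc U + r mod U"
      using div_mult_mod_eq[of r U] by (simp add: algebra_simps)
    moreover have "r mod U < Suc U" using U by (meson less_SucI mod_less_divisor)
    ultimately have "(r + r div U) mod Suc U = r mod U" by (simp only: mod_mult_self3 mod_less)
    moreover have "(t * Suc U + U) mod Suc U = U" by (simp only: mod_mult_self3 mod_less lessI)
    ultimately show ?thesis using mod_less_divisor[OF U, of r] by auto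
  qed
  then show "(\<lambda>r. r + r div U) ` {..<b * U} \<inter> (\<lambda>t. t * Suc U + U) ` {..<b} = {}" by auto
qed

lemma block_pattern_cover:
  fixes U b :: nat
  shows "(\<lambda>r. r + r div U) ` {..<b * U} \<union> (\<lambda>t. t * Suc U + U) ` {..<b} = {..<b * U + b}"
proof
  have "r + r div U < b * U + b" if "r < b * U" for r
    using that div_less_iff_less_mult[of U r b] by (cases "U = 0") auto
  moreover have "t * Suc U + U < b * U + b" if "t < b" for t
  proof -
    have "t * Suc U + U < Suc t * Suc U" by simp
    also have "\<dots> \<le> b * Suc U" using that by (intro mult_le_mono1) simp
    finally show ?thesis by simp
  qed
  ultimately show "(\<lambda>r. r + r div U) ` {..<b * U} \<union> (\<lambda>t. t * Suc U + U) ` {..<b} \<subseteq> {..<b * U + b}"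
    by auto
  show "{..<b * U + b} \<subseteq> (\<lambda>r. r + r div U) ` {..<b * U} \<union> (\<lambda>t. t * Suc U + U) ` {..<b}"
  proof
    fix x assume "x \<in> {..<b * U + b}"
    then have q: "x div Suc U < b" by (simp add: div_less_iff_less_mult algebra_simps)
    have x: "x = x div Suc U * Suc U + x mod Suc U" by (rule div_mult_mod_eq[symmetric])
    show "x \<in> (\<lambda>r. r + r div U) ` {..<b * U} \<union> (\<lambda>t. t * Suc U + U) ` {..<b}"
    proof (cases "x mod Suc U = U")
      case True
      then show ?thesis using q x by (auto intro!: image_eqI[of _ _ "x div Suc U"])
    next
      case False
      then have s: "x mod Suc U < U" using mod_less_divisor[of "Suc U" x] by linarith
      define r where "r = x div Suc U * U + x mod Suc U"
      have "r < Suc (x div Suc U) * U" using s unfolding r_def by simp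
      also have "\<dots> \<le> b * U" using q by (intro mult_le_mono1) simp
      finally have "r < b * U" .
      moreover have "x = r + r div U" using s x unfolding r_def by simp
      ultimately show ?thesis by auto
    qed
  qed
qed

lemma sum_div_blocks:
  fixes b U :: nat
  shows "(\<Sum>r<b * U. r div U) = U * (\<Sum>i\<in>{1..<b}. i)"
proof -
  have "(\<Sum>r\<in>{t * U..<t * U + U}. r div U) = U * t" for t
  proof -
    have "r div U = t" if "t * U \<le> r" "r < t * U + U" for r
      by (rule div_nat_eqI) (use that in \<open>auto simp: mult.commute\<close>)
    then have "(\<Sum>r\<in>{t * U..<t * U + U}. r div U) = (\<Sum>r\<in>{t * U..<t * U + U}. t)"
      by (intro sum.cong) auto
    then show ?thesis by simp
  qed
  then have "(\<Sum>r<b * U. r div U) = (\<Sum>t<b. U * t)"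
    unfolding sum.nat_group[symmetric] by simp
  also have "\<dots> = U * (\<Sum>i\<in>{1..<b}. i)"
    by (simp add: sum_distrib_left atLeast0LessThan[symmetric] sum_shift_lb_Suc0_0_upt)
  finally show ?thesis .
qed

lemma block_index:
  fixes t C k b :: nat assumes "t < b" and "k < C"
  shows "t * C + k < b * C" "(t * C + k) div C = t" "(t * C + k) mod C = k"
proof -
  have "t * C + k < Suc t * C" using assms(2) by simp
  also have "\<dots> \<le> b * C" using assms(1) by (intro mult_le_mono1) simp
  finally show "t * C + k < b * C" .
qed (use assms in auto)

definition block_diag :: "nat \<Rightarrow> nat \<Rightarrow> 'a::zero mat \<Rightarrow> 'a mat" where
  "block_diag C b A = mat (b * C) (b * C) (\<lambda>(r, c). if r div C = c div C then A $$ (r mod C, c mod C) else 0)"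

lemma det_block_diag:
  fixes A :: "'a::idom mat"
  assumes A: "A \<in> carrier_mat C C" and C: "0 < C"
  shows "det (block_diag C b A) = det A ^ b"
proof (induction b)
  case 0
  then show ?case by (simp add: block_diag_def)
next
  case (Suc b)
  have "block_diag C (Suc b) A = four_block_mat A (0\<^sub>m C (b * C)) (0\<^sub>m (b * C) C) (block_diag C b A)"
  proof (rule eq_matI)
    fix r c assume "r < dim_row (four_block_mat A (0\<^sub>m C (b * C)) (0\<^sub>m (b * C) C) (block_diag C b A))"
      and "c < dim_col (four_block_mat A (0\<^sub>m C (b * C)) (0\<^sub>m (b * C) C) (block_diag C b A))"
    then have rc: "r < C + b * C" "c < C + b * C" using A by (auto simp: block_diag_def)
    have shift: "x div C = Suc ((x - C) div C)" "x mod C = (x - C) mod C" if "\<not> x < C" for x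
      using that C by (auto simp: le_div_geq le_mod_geq)
    have small: "x div C = 0 \<longleftrightarrow> x < C" for x using C by (simp add: div_eq_0_iff)
    show "block_diag C (Suc b) A $$ (r, c) = four_block_mat A (0\<^sub>m C (b * C)) (0\<^sub>m (b * C) C) (block_diag C b A) $$ (r, c)"
      using rc A small[of r] small[of c] shift[of r] shift[of c]
      by (subst index_mat_four_block) (auto simp: block_diag_def)
  qed (use A in \<open>auto simp: block_diag_def\<close>)
  then show ?case using Suc.IH
    by (simp add: det_four_block_mat_upper_right_zero[OF A _ _ _, of _ "b * C"] block_diag_def)
qed

lemma sum_single_block:
  fixes g :: "nat \<Rightarrow> 'a::comm_monoid_add"
  assumes "t < b"
  shows "(\<Sum>k\<in>{0..<b * C}. if k div C = t then g k else 0) = (\<Sum>k<C. g (t * C + k))"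
proof -
  have "{k \<in> {0..<b * C}. k div C = t} = (\<lambda>k. t * C + k) ` {..<C}"
  proof
    show "{k \<in> {0..<b * C}. k div C = t} \<subseteq> (\<lambda>k. t * C + k) ` {..<C}"
    proof
      fix k assume k: "k \<in> {k \<in> {0..<b * C}. k div C = t}"
      then have "0 < C" by (cases C) auto
      with k have "k = t * C + k mod C" "k mod C < C" by auto
      then show "k \<in> (\<lambda>k. t * C + k) ` {..<C}" by blast
    qed
  qed (use block_index[OF assms] in auto)
  then have "(\<Sum>k\<in>{0..<b * C}. if k div C = t then g k else 0) = (\<Sum>k\<in>(\<lambda>k. t * C + k) ` {..<C}. g k)"
    by (simp add: sum.inter_filter[symmetric])
  also have "\<dots> = (\<Sum>k<C. g (t * C + k))"
    by (subst sum.reindex) (auto simp: inj_on_def)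
  finally show ?thesis .
qed

lemma mult_block_diag_index:
  fixes X W :: "'a::comm_ring_1 mat"
  assumes X: "X \<in> carrier_mat (b * C) (b * C)" and r: "r < b * C" and c: "c < b * C"
  shows "(X * block_diag C b W) $$ (r, c) = (\<Sum>k<C. X $$ (r, c div C * C + k) * W $$ (k, c mod C))"
proof -
  have C: "0 < C" using c by (cases C) auto
  then have t: "c div C < b" using c by (simp add: div_less_iff_less_mult)
  have "(X * block_diag C b W) $$ (r, c) = (\<Sum>k\<in>{0..<b * C}. X $$ (r, k) * block_diag C b W $$ (k, c))"
    using X r c by (simp add: block_diag_def scalar_prod_def)
  also have "\<dots> = (\<Sum>k\<in>{0..<b * C}. if k div C = c div C then X $$ (r, k) * W $$ (k mod C, c mod C) else 0)"
    by (rule sum.cong) (use c in \<open>auto simp: block_diag_def\<close>)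
  also have "\<dots> = (\<Sum>k<C. X $$ (r, c div C * C + k) * W $$ (k, c mod C))"
    using block_index[OF t] by (subst sum_single_block[OF t]) simp
  finally show ?thesis .
qed

lemma block_pattern_adj_rows:
  fixes X Y :: "'a::comm_ring_1 mat"
  assumes Y: "Y \<in> carrier_mat (Suc U) (Suc U)" and X: "X \<in> carrier_mat (b * Suc U) (b * Suc U)"
    and top: "\<And>r c. r < b * U \<Longrightarrow> c < b * Suc U \<Longrightarrow>
      X $$ (r, c) = (if c div Suc U = r div U then Y $$ (r mod U, c mod Suc U) else 0)"
    and r: "r < b * U" and c: "c < b * Suc U"
  shows "(X * block_diag (Suc U) b (adj_mat Y)) $$ (r, c) = (if c = r + r div U then det Y else 0)"
proof -
  define C where "C = Suc U"
  have U: "0 < U" using r by (cases U) auto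
  have rU: "r mod U < C" using U unfolding C_def by (meson less_SucI mod_less_divisor)
  have rC: "r < b * C" using r unfolding C_def by (simp add: less_trans_Suc trans_less_add1)
  have t: "c div C < b" using c unfolding C_def by (simp add: div_less_iff_less_mult)
  have W: "adj_mat Y \<in> carrier_mat C C" "Y * adj_mat Y = det Y \<cdot>\<^sub>m 1\<^sub>m C"
    using adj_mat[OF Y] unfolding C_def by auto
  have top': "X $$ (r, c') = (if c' div C = r div U then Y $$ (r mod U, c' mod C) else 0)"
    if "c' < b * C" for c'
    using top[OF r] that unfolding C_def .
  have X_row: "X $$ (r, c div C * C + k) = (if c div C = r div U then Y $$ (r mod U, k) else 0)"
    if "k < C" for k
    using top'[of "c div C * C + k"] block_index[OF t that] by simp
  have "(X * block_diag C b (adj_mat Y)) $$ (r, c) = (\<Sum>k<C. X $$ (r, c div C * C + k) * adj_mat Y $$ (k, c mod C))"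
    using X rC c unfolding C_def by (intro mult_block_diag_index) auto
  also have "\<dots> = (\<Sum>k<C. (if c div C = r div U then Y $$ (r mod U, k) else 0) * adj_mat Y $$ (k, c mod C))"
    using X_row by (intro sum.cong) auto
  also have "\<dots> = (if c div C = r div U then (Y * adj_mat Y) $$ (r mod U, c mod C) else 0)"
    using Y W(1) rU unfolding C_def by (auto simp: scalar_prod_def intro!: sum.cong)
  also have "\<dots> = (if c div C = r div U \<and> c mod C = r mod U then det Y else 0)"
    unfolding W(2) using rU unfolding C_def by auto
  also have "(c div C = r div U \<and> c mod C = r mod U) \<longleftrightarrow> c = r + r div U"
  proof -
    have "r + r div U = r div U * C + r mod U"
      using div_mult_mod_eq[of r U] unfolding C_def by (simp add: algebra_simps)
    moreover have "(r div U * C + r mod U) div C = r div U" "(r div U * C + r mod U) mod C = r mod U"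
      using rU by simp_all
    ultimately show ?thesis by (metis div_mult_mod_eq)
  qed
  finally show ?thesis unfolding C_def .
qed

(* Proof: multiplying by diag(adj Y, ..., adj Y)
   turns the top rows into det Y times unit rows, which are then eliminated by det_unit_rows. *)
lemma det_block_pattern:
  fixes X Y :: "'a::idom mat"
  assumes C: "1 \<le> C" and Y: "Y \<in> carrier_mat C C" and dY: "det Y \<noteq> 0"
    and X: "X \<in> carrier_mat (b * C) (b * C)"
    and top: "\<And>r c. r < b * (C - 1) \<Longrightarrow> c < b * C \<Longrightarrow>
      X $$ (r, c) = (if c div C = r div (C - 1) then Y $$ (r mod (C - 1), c mod C) else 0)"
  shows "det X = (-1) ^ ((C - 1) * (\<Sum>i\<in>{1..<b}. i)) *
    det (mat b b (\<lambda>(i, t). \<Sum>c<C. X $$ (b * (C - 1) + i, t * C + c) * cofactor Y (C - 1) c))"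
proof -
  define U where "U = C - 1"
  have CU: "C = Suc U" using C unfolding U_def by simp
  define W where "W = adj_mat Y"
  have W: "W \<in> carrier_mat C C" "Y * W = det Y \<cdot>\<^sub>m 1\<^sub>m C" using adj_mat[OF Y] unfolding W_def by auto
  have "det Y * det W = det Y * det Y ^ U"
    using arg_cong[OF W(2), of det] det_mult[OF Y W(1)] CU by simp
  then have "det W = det Y ^ U" using dY by simp
  then have det_B: "det (block_diag C b W) = det Y ^ (U * b)"
    using det_block_diag[OF W(1), of b] CU by (simp add: power_mult)
  define Z where "Z = X * block_diag C b W"
  have B: "block_diag C b W \<in> carrier_mat (b * C) (b * C)" by (simp add: block_diag_def)
  have Z: "Z \<in> carrier_mat (b * U + b) (b * U + b)" using X B unfolding Z_def CU by auto
  have "det Z = det X * det Y ^ (U * b)"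
    unfolding Z_def det_mult[OF X B] det_B ..
  moreover have "det Z = (-1) ^ (U * (\<Sum>i\<in>{1..<b}. i)) * det Y ^ (b * U) *
      det (mat b b (\<lambda>(i, t). Z $$ (b * U + i, t * C + U)))"
  proof -
    have "Z $$ (r, c) = (if c = r + r div U then det Y else 0)" if "r < b * U" "c < b * U + b" for r c
      using block_pattern_adj_rows[OF Y[unfolded CU] X[unfolded CU] top[folded U_def, unfolded CU]] that
      unfolding Z_def W_def CU by (simp add: algebra_simps)
    from det_unit_rows[OF Z block_pattern_mono block_pattern_cover this]
    show ?thesis using sum_div_blocks[where b = b and U = U] CU by simp
  qed
  moreover have "mat b b (\<lambda>(i, t). Z $$ (b * U + i, t * C + U)) =
     mat b b (\<lambda>(i, t). \<Sum>c<C. X $$ (b * U + i, t * C + c) * cofactor Y U c)"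
  proof (rule eq_matI)
    fix i t assume "i < dim_row (mat b b (\<lambda>(i, t). \<Sum>c<C. X $$ (b * U + i, t * C + c) * cofactor Y U c))"
      "t < dim_col (mat b b (\<lambda>(i, t). \<Sum>c<C. X $$ (b * U + i, t * C + c) * cofactor Y U c))"
    then have it: "i < b" "t < b" by auto
    have "Z $$ (b * U + i, t * C + U) = (\<Sum>k<C. X $$ (b * U + i, t * C + k) * W $$ (k, U))"
      unfolding Z_def using X it block_index[OF it(2), of U C] CU by (subst mult_block_diag_index) auto
    also have "\<dots> = (\<Sum>c<C. X $$ (b * U + i, t * C + c) * cofactor Y U c)"
      using Y CU by (intro sum.cong refl) (auto simp: W_def adj_mat_def)
    finally show "mat b b (\<lambda>(i, t). Z $$ (b * U + i, t * C + U)) $$ (i, t) =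
      mat b b (\<lambda>(i, t). \<Sum>c<C. X $$ (b * U + i, t * C + c) * cofactor Y U c) $$ (i, t)"
      using it by simp
  qed auto
  ultimately show ?thesis
    using dY unfolding U_def by (simp add: mult.commute)
qed

lemma coeff_int_shift:
  fixes A :: "'a::zero poly"
  assumes "degree A = p"
  shows "coeff_int A (int p - int i + int j) = (if j \<le> i \<and> i - j \<le> p then coeff A (p - (i - j)) else 0)"
proof (cases "j \<le> i \<and> i - j \<le> p")
  case True
  then have "nat (int p - int i + int j) = p - (i - j)" "\<not> int p - int i + int j < 0" by auto
  then show ?thesis using True unfolding coeff_int_def by simp
next
  case False
  then have "int p - int i + int j < 0 \<or> coeff A (nat (int p - int i + int j)) = 0"
    using assms by (auto intro: coeff_eq_0)
  then show ?thesis using False unfolding coeff_int_def by auto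
qed

lemma sres_tau_eq_subresultant'_mat:
  fixes A B :: "'a::comm_ring_1 poly"
  assumes J: "J < degree B" and BA: "degree B \<le> degree A" and tau: "\<tau> \<le> J"
  shows "sres_tau A B J \<tau> = subresultant'_mat J \<tau> A B"
proof -
  define p where "p = degree A"
  define q where "q = degree B"
  have Jq: "J < q" and qp: "q \<le> p" using J BA p_def q_def by auto
  define n where "n = p + q - 2 * J"
  have n: "n = (p - J) + (q - J)" using Jq qp n_def by simp
  define ri where "ri = p + q - J - \<tau> - 1"
  have ri: "ri < p + q - J" "n - 1 < p + q - J" using Jq qp tau unfolding ri_def n_def by auto
  note coeff_A = coeff_int_shift[OF p_def[symmetric]] and coeff_B = coeff_int_shift[OF q_def[symmetric]]
  show ?thesis
  proof (rule eq_matI)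
    fix i j assume "i < dim_row (subresultant'_mat J \<tau> A B)" "j < dim_col (subresultant'_mat J \<tau> A B)"
    then have i: "i < n" and j: "j < n" unfolding subresultant'_mat_def Let_def n p_def q_def by auto
    have lhs: "sres_tau A B J \<tau> $$ (i, j) = sres_mat p q A B J $$ (if i < n - 1 then i else ri, j)"
      unfolding sres_tau_def Let_def tau_sub_def p_def[symmetric] q_def[symmetric] n_def[symmetric]
        ri_def[symmetric] using i j by simp
    have rhs: "subresultant'_mat J \<tau> A B $$ (i, j) = (if j < q - J
           then if i = n - 1 then coeff_int A (int \<tau> - int (q - J - 1) + int j)
                else coeff_int A (int p - int i + int j)
           else if i = n - 1 then coeff_int B (int \<tau> - int (p - J - 1) + int (j - (q - J)))
                   else coeff_int B (int q - int i + int (j - (q - J))))"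
      unfolding subresultant'_mat_def Let_def p_def[symmetric] q_def[symmetric] n[symmetric] using i j by simp
    have last_row: "int \<tau> - int (q - J - 1) + int j = int p - int ri + int j"
      "int \<tau> - int (p - J - 1) + int jj = int q - int ri + int jj" for jj
      using Jq qp tau unfolding ri_def by auto
    have sres: "sres_mat p q A B J $$ (r, j) = (if j < q - J
      then (if j \<le> r \<and> r - j \<le> p then coeff A (p - (r - j)) else 0)
      else (if j - (q - J) \<le> r \<and> r - (j - (q - J)) \<le> q then coeff B (q - (r - (j - (q - J)))) else 0))"
      if "r < p + q - J" for r
      unfolding sres_mat_def using that j n_def by (simp add: Let_def)
    show "sres_tau A B J \<tau> $$ (i, j) = subresultant'_mat J \<tau> A B $$ (i, j)"
    proof (cases "i = n - 1")
      case True
      then show ?thesis unfolding lhs rhs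
        using sres[of ri] ri coeff_A coeff_B unfolding last_row by (auto simp del: of_nat_diff)
    next
      case False
      then have "i < n - 1" "i < p + q - J" using i ri by auto
      then show ?thesis unfolding lhs rhs
        using False sres coeff_A coeff_B by (auto simp del: of_nat_diff)
    qed
  qed (use Jq qp in \<open>auto simp: sres_tau_def subresultant'_mat_def Let_def tau_sub_def n_def p_def q_def\<close>)
qed

lemma det_sres_tau:
  fixes A B :: "'a::comm_ring_1 poly"
  assumes "J < degree B" and "degree B \<le> degree A" and "\<tau> \<le> J"
  shows "det (sres_tau A B J \<tau>) = coeff (subresultant J A B) \<tau>"
  unfolding coeff_subresultant sres_tau_eq_subresultant'_mat[OF assms] using assms(1) by simp

lemma smult_cancel_left:
  fixes x y :: "'a::field"
  assumes "smult x P = smult y R" and "x \<noteq> 0"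
  shows "P = smult (y / x) R"
  using arg_cong[OF assms(1), of "smult (1 / x)"] assms(2) by simp

(* One division step alpha Q0 = q Q1 + beta Q2 of a PRS relates the subresultants of (Q0, Q1)
   and (Q1, Q2) of index below deg Q2 (a consequence of Brown-Traub's fundamental lemmas). *)
lemma subresultant_prs_step:
  fixes Q0 Q1 Q2 q :: "'a::field poly"
  assumes rel: "smult a1 Q0 = q * Q1 + smult b1 Q2" and a1: "a1 \<noteq> 0" and b1: "b1 \<noteq> 0"
    and d01: "degree Q1 < degree Q0" and d12: "degree Q2 < degree Q1" and J: "J < degree Q2"
  shows "subresultant J Q0 Q1 = smult ((b1 / a1) ^ (degree Q1 - J) * lead_coeff Q1 ^ (degree Q0 - degree Q2)
     * (-1) ^ ((degree Q0 - J) * (degree Q1 - J))) (subresultant J Q1 Q2)"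
proof -
  have "smult a1 Q0 + (-q) * Q1 = smult b1 Q2" using rel by simp
  from BT_lemma_1_12[OF this] d01 d12 J a1 b1
  have "subresultant J (smult a1 Q0) Q1 = smult ((-1) ^ ((degree Q0 - J) * (degree Q1 - J)) *
     lead_coeff Q1 ^ (degree Q0 - degree Q2)) (subresultant J Q1 (smult b1 Q2))" by auto
  then have "smult (a1 ^ (degree Q1 - J)) (subresultant J Q0 Q1) = smult ((-1) ^ ((degree Q0 - J) * (degree Q1 - J)) *
     lead_coeff Q1 ^ (degree Q0 - degree Q2) * b1 ^ (degree Q1 - J)) (subresultant J Q1 Q2)"
    unfolding subresultant_smult_left[OF a1] subresultant_smult_right[OF b1] by simp
  from smult_cancel_left[OF this] a1 show ?thesis by (simp add: power_divide field_simps)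
qed

lemma subresultant_prs_last:
  fixes Q0 Q1 Q2 q :: "'a::field poly"
  assumes rel: "smult a1 Q0 = q * Q1 + smult b1 Q2" and a1: "a1 \<noteq> 0" and b1: "b1 \<noteq> 0"
    and d01: "degree Q1 < degree Q0" and d12: "degree Q2 < degree Q1"
  shows "subresultant (degree Q2) Q0 Q1 = smult ((b1 / a1) ^ (degree Q1 - degree Q2) *
     lead_coeff Q1 ^ (degree Q0 - degree Q2) * (-1) ^ ((degree Q0 - degree Q2) * (degree Q1 - degree Q2)) *
     lead_coeff Q2 ^ (degree Q1 - degree Q2 - 1)) Q2"
proof -
  define e where "e = degree Q1 - degree Q2"
  have b1e: "b1 ^ (e - 1) * b1 = b1 ^ e" using d12 unfolding e_def by (metis Suc_diff_1 power_Suc2 zero_less_diff)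
  have "smult a1 Q0 + (-q) * Q1 = smult b1 Q2" using rel by simp
  from BT_lemma_1_13[OF this] d01 d12 a1 b1
  have "subresultant (degree Q2) (smult a1 Q0) Q1 = smult ((-1) ^ ((degree Q0 - degree Q2) * e) *
     lead_coeff Q1 ^ (degree Q0 - degree Q2) * (b1 * lead_coeff Q2) ^ (e - 1)) (smult b1 Q2)"
    unfolding e_def by auto
  then have "smult (a1 ^ e) (subresultant (degree Q2) Q0 Q1) = smult ((-1) ^ ((degree Q0 - degree Q2) * e) *
     lead_coeff Q1 ^ (degree Q0 - degree Q2) * b1 ^ e * lead_coeff Q2 ^ (e - 1)) Q2"
    unfolding subresultant_smult_left[OF a1] e_def[symmetric] b1e[symmetric]
    by (simp add: power_mult_distrib ac_simps)
  from smult_cancel_left[OF this] a1 show ?thesis unfolding e_def by (simp add: power_divide field_simps)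
qed

lemma PRS_degree_decreasing:
  assumes prs: "is_PRS A B Q L a bt" and "1 \<le> i" "i < i'" "i' \<le> L"
  shows "degree (Q i') < degree (Q i)"
proof -
  have drop: "degree (Q (Suc x)) < degree (Q x)" if "1 \<le> x" "Suc x \<le> L" for x
    using prs that unfolding is_PRS_def by (auto dest!: bspec[of _ _ "Suc x"])
  from \<open>i < i'\<close> have "Suc i \<le> i'" by simp
  then show ?thesis using \<open>i' \<le> L\<close>
  proof (induction i' rule: dec_induct)
    case base
    then show ?case using drop \<open>1 \<le> i\<close> by simp
  next
    case (step n)
    then show ?case using drop[of n] \<open>1 \<le> i\<close> by simp
  qed
qed

lemma PRS_nonzero: "is_PRS A B Q L a bt \<Longrightarrow> 1 \<le> i \<Longrightarrow> i \<le> L \<Longrightarrow> Q i \<noteq> 0"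
  unfolding is_PRS_def by auto

lemma PRS_division:
  assumes "is_PRS A B Q L a bt" "3 \<le> i" "i \<le> L"
  shows "a i \<noteq> 0" "bt i \<noteq> 0" "\<exists>q. smult (a i) (Q (i - 2)) = q * Q (i - 1) + smult (bt i) (Q i)"
  using assms unfolding is_PRS_def by auto

(* Telescoping subresultant_prs_step from position i of a PRS up to its end, closing with
   subresultant_prs_last: the subresultant of index J = deg Q_L of (Q_(i-2), Q_(i-1)) is an
   explicit multiple of Q_L. *)
lemma subresultant_PRS_telescope:
  fixes Q :: "nat \<Rightarrow> 'a::field_gcd poly"
  assumes prs: "is_PRS A B Q L a bt" and i: "3 \<le> i" "i \<le> L"
  defines "J \<equiv> degree (Q L)"
    and "tm \<equiv> \<lambda>x. (bt x / a x) ^ (degree (Q (x - 1)) - degree (Q L)) *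
      lead_coeff (Q (x - 1)) ^ (degree (Q (x - 2)) - degree (Q x)) *
      (-1) ^ ((degree (Q (x - 2)) - degree (Q L)) * (degree (Q (x - 1)) - degree (Q L)))"
  shows "subresultant J (Q (i - 2)) (Q (i - 1)) =
    smult (lead_coeff (Q L) ^ (degree (Q (L - 1)) - J - 1) * (\<Prod>x\<in>{i..L}. tm x)) (Q L)"
  using i(2)
proof (induction i rule: inc_induct)
  case base
  have L: "3 \<le> L" "L \<le> L" using i by auto
  note rel = PRS_division[OF prs L]
  obtain q where div: "smult (a L) (Q (L - 2)) = q * Q (L - 1) + smult (bt L) (Q L)" using rel(3) by blast
  have "degree (Q (L - 1)) < degree (Q (L - 2))" "degree (Q L) < degree (Q (L - 1))"
    using L by (auto intro!: PRS_degree_decreasing[OF prs])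
  from subresultant_prs_last[OF div rel(1,2) this] show ?case
    unfolding J_def tm_def by (simp add: ac_simps)
next
  case (step m)
  have m: "3 \<le> m" "m \<le> L" using step.hyps i by auto
  note rel = PRS_division[OF prs m]
  obtain q where "smult (a m) (Q (m - 2)) = q * Q (m - 1) + smult (bt m) (Q m)" using rel(3) by blast
  moreover have "degree (Q (m - 1)) < degree (Q (m - 2))" "degree (Q m) < degree (Q (m - 1))"
    "J < degree (Q m)"
    unfolding J_def using m step.hyps by (auto intro!: PRS_degree_decreasing[OF prs])
  ultimately have "subresultant J (Q (m - 2)) (Q (m - 1)) = smult (tm m) (subresultant J (Q (m - 1)) (Q m))"
    using subresultant_prs_step[OF _ rel(1,2)] unfolding tm_def J_def by simp
  also have "subresultant J (Q (m - 1)) (Q m) = subresultant J (Q (Suc m - 2)) (Q (Suc m - 1))"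
    using m by (simp add: numeral_2_eq_2)
  also have "(\<Prod>x\<in>{m..L}. tm x) = tm m * (\<Prod>x\<in>{Suc m..L}. tm x)"
    using step.hyps by (simp add: prod.atLeast_Suc_atMost)
  ultimately show ?case using step.IH by (simp add: ac_simps)
qed

(* Fundamental theorem of PRSs: the subresultant of index j_k = deg P_l of a PRS (P_1, ..., P_l)
   is B_k P_l; the constant B_k is exactly the factor produced by the telescope from i = 3. *)
lemma subresultant_PRS_fundamental:
  fixes P :: "nat \<Rightarrow> nat \<Rightarrow> 'a::field_gcd poly"
  assumes prs: "is_PRS (P k 1) (P k 2) (P k) (l k) (\<alpha> k) (\<beta> k)" and L3: "3 \<le> l k"
  shows "subresultant (degree (P k (l k))) (P k 1) (P k 2) = smult (Bconst P l \<alpha> \<beta> k) (P k (l k))"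
proof -
  define n where "n i = degree (P k i)" for i
  have "n (x - 2) - n (x - 2 + 1) + (n (x - 1) - n (x - 1 + 1)) = n (x - 2) - n x"
    if "x \<in> {3..l k}" for x
  proof -
    have "n (x - 1) < n (x - 2)" "n x < n (x - 1)"
      unfolding n_def using that by (auto intro!: PRS_degree_decreasing[OF prs])
    then show ?thesis using that by (auto simp: numeral_2_eq_2 numeral_3_eq_3 Suc_diff_Suc)
  qed
  then have "Bconst P l \<alpha> \<beta> k = lead_coeff (P k (l k)) ^ (n (l k - 1) - n (l k) - 1) *
    (\<Prod>x\<in>{3..l k}. (\<beta> k x / \<alpha> k x) ^ (n (x - 1) - n (l k)) *
      lead_coeff (P k (x - 1)) ^ (n (x - 2) - n x) * (-1) ^ ((n (x - 2) - n (l k)) * (n (x - 1) - n (l k))))"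
    unfolding Bconst_def Let_def n_def[symmetric] using L3 by (auto intro!: prod.cong)
  then show ?thesis
    using subresultant_PRS_telescope[OF prs le_refl L3] unfolding n_def by simp
qed

lemma tau_sub_index:
  "r < D \<Longrightarrow> c < D \<Longrightarrow> tau_sub M D ri $$ (r, c) = M $$ (if r < D - 1 then r else ri, c)"
  unfolding tau_sub_def by simp

(* Laplace expansion of tau_sub M C r along its last row (row r of M): all these determinants
   share the cofactors of the last row of the top C x C block. *)
lemma det_tau_sub_expand:
  fixes M :: "'a::comm_ring_1 mat"
  assumes C: "1 \<le> C"
  shows "det (tau_sub M C r) = (\<Sum>c<C. M $$ (r, c) * cofactor (tau_sub M C (C - 1)) (C - 1) c)"
proof -
  have T: "tau_sub M C r \<in> carrier_mat C C" by (simp add: tau_sub_def)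
  have "det (tau_sub M C r) = (\<Sum>c<C. tau_sub M C r $$ (C - 1, c) * cofactor (tau_sub M C r) (C - 1) c)"
    by (rule laplace_expansion_row[OF T]) (use C in simp)
  also have "\<dots> = (\<Sum>c<C. M $$ (r, c) * cofactor (tau_sub M C (C - 1)) (C - 1) c)"
  proof (rule sum.cong[OF refl])
    fix c assume c: "c \<in> {..<C}"
    have "mat_delete (tau_sub M C r) (C - 1) c = mat_delete (tau_sub M C (C - 1)) (C - 1) c"
      by (rule eq_matI) (auto simp: mat_delete_def tau_sub_def)
    then show "tau_sub M C r $$ (C - 1, c) * cofactor (tau_sub M C r) (C - 1) c =
      M $$ (r, c) * cofactor (tau_sub M C (C - 1)) (C - 1) c"
      using c C unfolding cofactor_def by (simp add: tau_sub_def)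
  qed
  finally show ?thesis .
qed

lemma rec_block_entries:
  fixes M :: "'a::comm_ring_1 mat"
  assumes MC: "M \<in> carrier_mat (C + J) C" and C: "1 \<le> C" and jJ: "j + 1 < J"
  defines "b \<equiv> 2 * J - 2 * j - 1" and "e \<equiv> J - j - 1"
  shows "rec_block M J j \<in> carrier_mat (b * C + j) (b * C)"
    and "\<And>r c. r < b * (C - 1) \<Longrightarrow> c < b * C \<Longrightarrow>
      rec_block M J j $$ (r, c) = (if c div C = r div (C - 1) then M $$ (r mod (C - 1), c mod C) else 0)"
    and "\<And>\<rho> t c. \<rho> < b + j \<Longrightarrow> t < b \<Longrightarrow> c < C \<Longrightarrow> rec_block M J j $$ (b * (C - 1) + \<rho>, t * C + c) =
      (if t < e then (if t \<le> \<rho> \<and> \<rho> - t \<le> J then M $$ (C - 1 + (\<rho> - t), c) else 0)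
       else (if t - e \<le> \<rho> \<and> \<rho> - (t - e) < J
             then of_nat (J - (\<rho> - (t - e))) * M $$ (C - 1 + (\<rho> - (t - e)), c) else 0))"
proof -
  have dims: "dim_row M - (J + 1) = C - 1" "dim_col M = C" using MC by auto
  have bC: "b * (C - 1) + b = b * C" using C by (cases C) (auto simp: algebra_simps)
  have rows: "b * (C - 1) + (2 * J - j - 1) = b * C + j" using bC jJ unfolding b_def by linarith
  have rb: "rec_block M J j = mat (b * C + j) (b * C) (\<lambda>(r, c).
      let s = c div C; cc = c mod C in
      if r < b * (C - 1) then (if s = r div (C - 1) then M $$ (r mod (C - 1), cc) else 0)
      else (let r' = r - b * (C - 1) in
        if s < e then (if s \<le> r' \<and> r' - s \<le> J then M $$ ((C - 1) + (r' - s), cc) else 0)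
        else (let s' = s - e in
          if s' \<le> r' \<and> r' - s' < J then of_nat (J - (r' - s')) * M $$ ((C - 1) + (r' - s'), cc)
          else 0)))"
    unfolding rec_block_def Let_def dims unfolding b_def[symmetric] e_def[symmetric] rows ..
  show "rec_block M J j \<in> carrier_mat (b * C + j) (b * C)" unfolding rb by simp
  show "rec_block M J j $$ (r, c) = (if c div C = r div (C - 1) then M $$ (r mod (C - 1), c mod C) else 0)"
    if "r < b * (C - 1)" "c < b * C" for r c
    using that bC unfolding rb by (simp add: Let_def)
  show "rec_block M J j $$ (b * (C - 1) + \<rho>, t * C + c) =
      (if t < e then (if t \<le> \<rho> \<and> \<rho> - t \<le> J then M $$ (C - 1 + (\<rho> - t), c) else 0)
       else (if t - e \<le> \<rho> \<and> \<rho> - (t - e) < J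
             then of_nat (J - (\<rho> - (t - e))) * M $$ (C - 1 + (\<rho> - (t - e)), c) else 0))"
    if "\<rho> < b + j" "t < b" "c < C" for \<rho> t c
    using that bC block_index[OF that(2,3)] unfolding rb by (simp add: Let_def)
qed

(* When the minors of M are the coefficients of a polynomial A, this
   reproduces the entries of the subresultant matrix N^(j)(A, A'): the blocks built from M give
   the coefficients of A, the blocks built from the weighted rows give those of A'. *)
lemma rec_block_cofactor_row:
  fixes M :: "'a::idom mat" and A :: "'a poly"
  assumes MC: "M \<in> carrier_mat (C + J) C" and C: "1 \<le> C" and jJ: "j + 1 < J"
    and minors: "\<And>x. x \<le> J \<Longrightarrow> det (tau_sub M C (C - 1 + x)) = coeff A (J - x)"
  defines "b \<equiv> 2 * J - 2 * j - 1"
  assumes \<rho>: "\<rho> < b + j" and t: "t < b"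
  shows "(\<Sum>c<C. rec_block M J j $$ (b * (C - 1) + \<rho>, t * C + c) * cofactor (tau_sub M C (C - 1)) (C - 1) c) =
    sres_mat J (J - 1) A (pderiv A) j $$ (\<rho>, t)"
proof -
  define e where "e = J - j - 1"
  define cof where "cof c = cofactor (tau_sub M C (C - 1)) (C - 1) c" for c
  have row: "(\<Sum>c<C. M $$ (C - 1 + x, c) * cof c) = coeff A (J - x)" if "x \<le> J" for x
    using det_tau_sub_expand[OF C, of M "C - 1 + x"] minors[OF that] unfolding cof_def by simp
  have "(\<Sum>c<C. rec_block M J j $$ (b * (C - 1) + \<rho>, t * C + c) * cof c) =
    (\<Sum>c<C. (if t < e then (if t \<le> \<rho> \<and> \<rho> - t \<le> J then M $$ (C - 1 + (\<rho> - t), c) else 0)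
       else (if t - e \<le> \<rho> \<and> \<rho> - (t - e) < J
             then of_nat (J - (\<rho> - (t - e))) * M $$ (C - 1 + (\<rho> - (t - e)), c) else 0)) * cof c)"
    using rec_block_entries(3)[OF MC C jJ, folded b_def e_def, OF \<rho> t] by (intro sum.cong) auto
  also have "\<dots> = (if t < e then (if t \<le> \<rho> \<and> \<rho> - t \<le> J then (\<Sum>c<C. M $$ (C - 1 + (\<rho> - t), c) * cof c) else 0)
       else (if t - e \<le> \<rho> \<and> \<rho> - (t - e) < J
             then of_nat (J - (\<rho> - (t - e))) * (\<Sum>c<C. M $$ (C - 1 + (\<rho> - (t - e)), c) * cof c) else 0))"
    by (auto simp: sum_distrib_left mult.assoc)
  also have "\<dots> = (if t < e then (if t \<le> \<rho> \<and> \<rho> - t \<le> J then coeff A (J - (\<rho> - t)) else 0)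
       else (if t - e \<le> \<rho> \<and> \<rho> - (t - e) < J
             then of_nat (J - (\<rho> - (t - e))) * coeff A (J - (\<rho> - (t - e))) else 0))"
    using row[of "\<rho> - t"] row[of "\<rho> - (t - e)"] by auto
  also have "\<dots> = sres_mat J (J - 1) A (pderiv A) j $$ (\<rho>, t)"
  proof -
    have dims: "J + (J - 1) - j = b + j" "J + (J - 1) - 2 * j = b" "J - 1 - j = e"
      unfolding b_def e_def using jJ by auto
    have "coeff (pderiv A) (J - 1 - x) = of_nat (J - x) * coeff A (J - x)" if "x < J" for x
      using that by (simp add: coeff_pderiv Suc_diff_Suc)
    moreover have "x \<le> J - 1 \<longleftrightarrow> x < J" for x using jJ by auto
    ultimately show ?thesis
      unfolding sres_mat_def dims Let_def using \<rho> t by auto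
  qed
  finally show ?thesis unfolding cof_def .
qed

lemma rec_block_det:
  fixes M :: "'a::idom mat" and A :: "'a poly"
  assumes MC: "M \<in> carrier_mat (C + J) C" and C: "1 \<le> C" and jJ: "j + 1 < J" and tau: "\<tau> \<le> j"
    and minors: "\<And>x. x \<le> J \<Longrightarrow> det (tau_sub M C (C - 1 + x)) = coeff A (J - x)"
    and lc: "coeff A J \<noteq> 0"
  defines "b \<equiv> 2 * J - 2 * j - 1"
  shows "det (tau_sub (rec_block M J j) (b * C) (b * C + j - \<tau> - 1)) =
    (-1) ^ ((C - 1) * (\<Sum>i\<in>{1..<b}. i)) * det (tau_sub (sres_mat J (J - 1) A (pderiv A) j) b (b + j - \<tau> - 1))"
proof -
  note RB = rec_block_entries[OF MC C jJ, folded b_def]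
  define X where "X = tau_sub (rec_block M J j) (b * C) (b * C + j - \<tau> - 1)"
  define Y where "Y = tau_sub M C (C - 1)"
  have b1: "1 \<le> b" unfolding b_def using jJ by simp
  have bC: "b * (C - 1) + b = b * C" using C by (cases C) (auto simp: algebra_simps)
  have Y: "Y \<in> carrier_mat C C" unfolding Y_def tau_sub_def by simp
  have dY: "det Y \<noteq> 0" using minors[of 0] lc unfolding Y_def by simp
  have X: "X \<in> carrier_mat (b * C) (b * C)" unfolding X_def tau_sub_def by simp
  have top: "X $$ (r, c) = (if c div C = r div (C - 1) then Y $$ (r mod (C - 1), c mod C) else 0)"
    if r: "r < b * (C - 1)" and c: "c < b * C" for r c
  proof -
    have "r mod (C - 1) < C - 1" using r by (cases "C - 1") auto
    moreover have "r < b * C - 1" using r bC b1 by linarith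
    ultimately show ?thesis unfolding X_def Y_def using RB(2)[OF r c] c by (simp add: tau_sub_index)
  qed
  have X_row: "X $$ (b * (C - 1) + i, t * C + c) =
      rec_block M J j $$ (b * (C - 1) + (if i < b - 1 then i else b + j - \<tau> - 1), t * C + c)"
    if i: "i < b" and tc: "t * C + c < b * C" for i t c
  proof -
    have "b * (C - 1) + i < b * C" "(b * (C - 1) + i < b * C - 1) = (i < b - 1)" using bC i by linarith+
    moreover have "b * C + j - \<tau> - 1 = b * (C - 1) + (b + j - \<tau> - 1)" using bC b1 tau by linarith
    ultimately show ?thesis unfolding X_def using tc by (simp add: tau_sub_index)
  qed
  have cofactor_row: "(\<Sum>c<C. rec_block M J j $$ (b * (C - 1) + \<rho>, t * C + c) * cofactor Y (C - 1) c) =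
      sres_mat J (J - 1) A (pderiv A) j $$ (\<rho>, t)" if "\<rho> < b + j" "t < b" for \<rho> t
    unfolding Y_def b_def by (rule rec_block_cofactor_row[OF MC C jJ]) (use minors that in \<open>auto simp: b_def\<close>)
  have "mat b b (\<lambda>(i, t). \<Sum>c<C. X $$ (b * (C - 1) + i, t * C + c) * cofactor Y (C - 1) c)
     = tau_sub (sres_mat J (J - 1) A (pderiv A) j) b (b + j - \<tau> - 1)"
  proof (rule eq_matI)
    fix i t assume "i < dim_row (tau_sub (sres_mat J (J - 1) A (pderiv A) j) b (b + j - \<tau> - 1))"
      "t < dim_col (tau_sub (sres_mat J (J - 1) A (pderiv A) j) b (b + j - \<tau> - 1))"
    then have i: "i < b" and t: "t < b" unfolding tau_sub_def by auto
    define \<rho> where "\<rho> = (if i < b - 1 then i else b + j - \<tau> - 1)"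
    have \<rho>: "\<rho> < b + j" unfolding \<rho>_def using i b1 by auto
    show "mat b b (\<lambda>(i, t). \<Sum>c<C. X $$ (b * (C - 1) + i, t * C + c) * cofactor Y (C - 1) c) $$ (i, t) =
      tau_sub (sres_mat J (J - 1) A (pderiv A) j) b (b + j - \<tau> - 1) $$ (i, t)"
      using cofactor_row[OF \<rho> t] X_row[OF i block_index(1)[OF t]]
      unfolding \<rho>_def tau_sub_def using i t by simp
  qed (auto simp: tau_sub_def)
  then show ?thesis
    using det_block_pattern[OF C Y dY X top] unfolding X_def by simp
qed

lemma det_sres_tau_smult:
  fixes P :: "'a::{idom,ring_char_0} poly"
  assumes dP: "degree P = J" and jJ: "j + 1 < J"
  defines "b \<equiv> 2 * J - 2 * j - 1"
  shows "det (tau_sub (sres_mat J (J - 1) (smult c P) (pderiv (smult c P)) j) b (b + j - \<tau> - 1))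
    = c ^ b * det (sres_tau P (pderiv P) j \<tau>)"
proof -
  define S where "S = sres_mat J (J - 1) P (pderiv P) j"
  have dims: "J + (J - 1) - 2 * j = b" "J + (J - 1) - j = b + j" unfolding b_def using jJ by auto
  have "sres_mat J (J - 1) (smult c P) (pderiv (smult c P)) j = c \<cdot>\<^sub>m S"
    unfolding pderiv_smult S_def by (rule eq_matI) (auto simp: sres_mat_def Let_def)
  moreover have "tau_sub (c \<cdot>\<^sub>m S) b (b + j - \<tau> - 1) = c \<cdot>\<^sub>m tau_sub S b (b + j - \<tau> - 1)"
    by (rule eq_matI) (auto simp: tau_sub_def S_def sres_mat_def dims simp del: One_nat_def)
  moreover have "sres_tau P (pderiv P) j \<tau> = tau_sub S b (b + j - \<tau> - 1)"
    unfolding sres_tau_def Let_def S_def degree_pderiv dP dims by (simp add: diff_diff_add)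
  ultimately show ?thesis by (simp add: tau_sub_def)
qed

lemma Bconst_nonzero:
  assumes prs: "is_PRS (P k 1) (P k 2) (P k) (l k) (\<alpha> k) (\<beta> k)"
  shows "Bconst P l \<alpha> \<beta> k \<noteq> 0"
proof -
  have L2: "2 \<le> l k" using prs unfolding is_PRS_def by auto
  have nonzero: "P k i \<noteq> 0" if "1 \<le> i" "i \<le> l k" for i
    using PRS_nonzero[OF prs that] .
  have rules: "\<alpha> k i \<noteq> 0" "\<beta> k i \<noteq> 0" if "3 \<le> i" "i \<le> l k" for i
    using PRS_division(1,2)[OF prs that] by auto
  have "lead_coeff (P k (l k)) \<noteq> 0" using nonzero L2 by simp
  then show ?thesis unfolding Bconst_def Let_def
    by (rule no_zero_divisors[OF power_not_zero]) (auto simp: prod_zero_iff nonzero rules)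
qed

lemma rsm_cols_step:
  "dim_col (rsm F G jj (Suc (Suc k)) j) = (2 * jj (Suc k) - 2 * j - 1) * dim_col (rsm F G jj (Suc k) (jj (Suc k)))"
  by (simp add: rec_block_def Let_def)

lemma uk_step: "2 \<le> k \<Longrightarrow> uk F G P l k = bkj F P l k (jseq F P l k) * uk F G P l (k - 1)"
proof -
  assume k: "2 \<le> k"
  show ?thesis
  proof (cases "k = 2")
    case False
    define k' where "k' = k - 3"
    have k': "k = Suc (Suc (Suc k'))" using k False unfolding k'_def by simp
    have "(\<Prod>i\<in>{2..k - 1}. 2 * jseq F P l (i - 1) - 2 * jseq F P l i - 1) =
      (\<Prod>i\<in>{2..k - 2}. 2 * jseq F P l (i - 1) - 2 * jseq F P l i - 1) *
      (2 * jseq F P l (k - 2) - 2 * jseq F P l (k - 1) - 1)"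
      unfolding k' by (simp add: prod.cl_ivl_Suc)
    moreover have "bkj F P l (k - 1) (jseq F P l (k - 1)) = 2 * jseq F P l (k - 2) - 2 * jseq F P l (k - 1) - 1"
      unfolding bkj_def k' by simp
    ultimately show ?thesis unfolding uk_def ukj_def using k' by (simp add: ac_simps)
  qed (simp add: uk_def ukj_def)
qed

context
  fixes F G :: "'a::{field_char_0,field_gcd} poly" and t :: nat and P :: "nat \<Rightarrow> nat \<Rightarrow> 'a poly"
    and l :: "nat \<Rightarrow> nat" and \<alpha> \<beta> :: "nat \<Rightarrow> nat \<Rightarrow> 'a"
  assumes recursive_PRS: "is_complete_recursive_PRS F G t P l \<alpha> \<beta>"
    and long: "\<forall>k\<in>{1..<t}. 3 \<le> l k"
begin

abbreviation Nbar :: "nat \<Rightarrow> nat \<Rightarrow> 'a mat" where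
  "Nbar \<equiv> rsm F G (jseq F P l)"

lemma level_PRS: "k \<in> {1..t} \<Longrightarrow> is_PRS (P k 1) (P k 2) (P k) (l k) (\<alpha> k) (\<beta> k)"
  using recursive_PRS unfolding is_complete_recursive_PRS_def by auto

lemma first_level: "P 1 1 = F" "P 1 2 = G"
  using recursive_PRS unfolding is_complete_recursive_PRS_def by auto

lemma next_level: "k \<in> {1..<t} \<Longrightarrow> P (Suc k) 1 = P k (l k) \<and> P (Suc k) 2 = pderiv (P (Suc k) 1)"
  using recursive_PRS unfolding is_complete_recursive_PRS_def by auto

lemma j_less_degree:
  assumes "k \<in> {1..<t}" shows "jseq F P l k < degree (P k 2)"
proof -
  have "3 \<le> l k" using long assms by auto
  then show ?thesis using PRS_degree_decreasing[OF level_PRS, of k 2 "l k"] assms unfolding jseq_def by auto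
qed

lemma next_level_degrees:
  "k \<in> {1..<t} \<Longrightarrow> degree (P (Suc k) 1) = jseq F P l k \<and> degree (P (Suc k) 2) = jseq F P l k - 1"
  using next_level[of k] unfolding jseq_def by (auto simp: degree_pderiv)

lemma Nbar_shape:
  "1 \<le> k \<Longrightarrow> k \<le> t \<Longrightarrow> j < degree (P k 2) \<Longrightarrow>
    Nbar k j \<in> carrier_mat (dim_col (Nbar k j) + j) (dim_col (Nbar k j)) \<and> 1 \<le> dim_col (Nbar k j)"
proof (induction k arbitrary: j rule: nat_induct_at_least)
  case base
  have "degree G < degree F" using level_PRS[of 1] base first_level unfolding is_PRS_def by auto
  then show ?case using base first_level by (simp add: sres_mat_def)
next
  case (Suc k)
  obtain k' where k': "k = Suc k'" using Suc.hyps by (cases k) auto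
  define J where "J = jseq F P l k"
  have k: "k \<in> {1..<t}" using Suc by auto
  have "J < degree (P k 2)" unfolding J_def using j_less_degree[OF k] .
  with Suc.IH[of J] k have M: "Nbar k J \<in> carrier_mat (dim_col (Nbar k J) + J) (dim_col (Nbar k J))"
    and C: "1 \<le> dim_col (Nbar k J)" by auto
  have jJ: "j + 1 < J" using Suc.prems next_level_degrees[OF k] unfolding J_def by auto
  have "Nbar (Suc k) j = rec_block (Nbar k J) J j" unfolding J_def k' by simp
  moreover have "1 \<le> (2 * J - 2 * j - 1) * dim_col (Nbar k J)" using jJ C by simp
  ultimately show ?case using rec_block_entries(1)[OF M C jJ] by auto
qed

(* The number of columns of Nbar^(k,j_k) is u_k, which determines the sign r_(k+1,j). *)
lemma Nbar_cols_uk: "1 \<le> k \<Longrightarrow> k < t \<Longrightarrow> dim_col (Nbar k (jseq F P l k)) = uk F G P l k"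
proof (induction k rule: nat_induct_at_least)
  case base
  then show ?case by (simp add: uk_def sres_mat_def)
next
  case (Suc k)
  obtain k' where k': "k = Suc k'" using Suc.hyps by (cases k) auto
  have "dim_col (Nbar (Suc k) (jseq F P l (Suc k))) =
    bkj F P l (Suc k) (jseq F P l (Suc k)) * dim_col (Nbar k (jseq F P l k))"
    unfolding k' rsm_cols_step bkj_def by simp
  then show ?case using Suc uk_step[of "Suc k" F G P l] by simp
qed

lemma Rbar_nonzero: "i < t \<Longrightarrow> Rbar F G P l \<alpha> \<beta> i \<noteq> 0"
proof (induction i)
  case (Suc i)
  then have "Bconst P l \<alpha> \<beta> (Suc i) \<noteq> 0" by (intro Bconst_nonzero level_PRS) auto
  then show ?case using Suc by (simp add: rkj_def)
qed simp

(* If the theorem holds at level k, then the minors of M = Nbar^(k,j_k) selected by the rows below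
   its top square block are the coefficients of Rbar_k P^(k+1)_1: by the fundamental theorem the
   subresultant of index j_k of level k is B_k P^(k+1)_1, and Rbar_k = Rbar_(k-1)^b_k r_k B_k. *)
lemma level_minors:
  fixes k x :: nat
  defines "J \<equiv> jseq F P l k"
  assumes k: "1 \<le> k" "k < t" and x: "x \<le> J"
    and IH: "\<And>\<tau>. \<tau> \<le> J \<Longrightarrow> det (rsm_tau F G (jseq F P l) k J \<tau>) =
      Rbar F G P l \<alpha> \<beta> (k - 1) ^ bkj F P l k J * rkj F G P l k J * det (sres_tau (P k 1) (P k 2) J \<tau>)"
  defines "C \<equiv> dim_col (Nbar k J)"
  shows "det (tau_sub (Nbar k J) C (C - 1 + x)) = coeff (smult (Rbar F G P l \<alpha> \<beta> k) (P (Suc k) 1)) (J - x)"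
proof -
  have prs: "is_PRS (P k 1) (P k 2) (P k) (l k) (\<alpha> k) (\<beta> k)" using level_PRS k by auto
  have J: "J < degree (P k 2)" unfolding J_def using j_less_degree k by auto
  have C: "1 \<le> C" unfolding C_def using Nbar_shape[OF k(1) _ J] k by auto
  have "subresultant J (P k 1) (P k 2) = smult (Bconst P l \<alpha> \<beta> k) (P (Suc k) 1)"
  proof -
    have "3 \<le> l k" using long k by auto
    from subresultant_PRS_fundamental[where P = P and k = k and l = l and \<alpha> = \<alpha> and \<beta> = \<beta>, OF prs this] show ?thesis
      using next_level[of k] k unfolding J_def jseq_def by auto
  qed
  moreover have "Rbar F G P l \<alpha> \<beta> k =
      Rbar F G P l \<alpha> \<beta> (k - 1) ^ bkj F P l k J * rkj F G P l k J * Bconst P l \<alpha> \<beta> k"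
    using k unfolding J_def by (cases k) auto
  moreover have "rsm_tau F G (jseq F P l) k J (J - x) = tau_sub (Nbar k J) C (C - 1 + x)"
  proof -
    have "C + J - (J - x) - 1 = C - 1 + x" using x C by linarith
    then show ?thesis unfolding rsm_tau_def Let_def C_def[symmetric] by (simp only:)
  qed
  moreover have "degree (P k 2) \<le> degree (P k 1)" using prs unfolding is_PRS_def by auto
  ultimately show ?thesis
    using IH[of "J - x"] det_sres_tau[OF J, where \<tau> = "J - x"] by simp
qed

(* Passing from level k to level k+1: rec_block_det reduces the minor of Nbar^(k+1,j) to a minor
   of N^(j)(A, A') with A = Rbar_k P^(k+1)_1, and pulling out the scalar gives Rbar_k^b_(k+1,j). *)
lemma recursion_step:
  fixes k j \<tau> :: nat
  assumes k: "1 \<le> k" "k < t"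
    and IH: "\<And>j \<tau>. j < degree (P k 2) \<Longrightarrow> \<tau> \<le> j \<Longrightarrow> det (rsm_tau F G (jseq F P l) k j \<tau>) =
      Rbar F G P l \<alpha> \<beta> (k - 1) ^ bkj F P l k j * rkj F G P l k j * det (sres_tau (P k 1) (P k 2) j \<tau>)"
    and j: "j < degree (P (Suc k) 2)" and tau: "\<tau> \<le> j"
  shows "det (rsm_tau F G (jseq F P l) (Suc k) j \<tau>) =
    Rbar F G P l \<alpha> \<beta> k ^ bkj F P l (Suc k) j * rkj F G P l (Suc k) j *
    det (sres_tau (P (Suc k) 1) (P (Suc k) 2) j \<tau>)"
proof -
  define J where "J = jseq F P l k"
  define M where "M = Nbar k J"
  define C where "C = dim_col M"
  define A where "A = smult (Rbar F G P l \<alpha> \<beta> k) (P (Suc k) 1)"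
  define b where "b = 2 * J - 2 * j - 1"
  have "J < degree (P k 2)" unfolding J_def using j_less_degree k by auto
  then have M: "M \<in> carrier_mat (C + J) C" and C: "1 \<le> C"
    using Nbar_shape[OF k(1)] k unfolding M_def C_def by auto
  have minors: "det (tau_sub M C (C - 1 + x)) = coeff A (J - x)" if "x \<le> J" for x
    unfolding M_def C_def A_def J_def
    by (rule level_minors[OF k]) (use that IH \<open>J < degree (P k 2)\<close> in \<open>auto simp: J_def\<close>)
  have degrees: "degree (P (Suc k) 1) = J" "P (Suc k) 2 = pderiv (P (Suc k) 1)"
    using next_level_degrees[of k] next_level[of k] k unfolding J_def by auto
  have "P (Suc k) 1 \<noteq> 0" using level_PRS[of "Suc k"] k unfolding is_PRS_def by auto
  then have lc: "coeff A J \<noteq> 0" unfolding A_def using Rbar_nonzero k by (simp flip: degrees(1))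
  have jJ: "j + 1 < J" using j next_level_degrees[of k] k unfolding J_def by auto
  have "Nbar (Suc k) j = rec_block M J j" unfolding M_def J_def using k by (cases k) auto
  then have "rsm_tau F G (jseq F P l) (Suc k) j \<tau> = tau_sub (rec_block M J j) (b * C) (b * C + j - \<tau> - 1)"
    unfolding rsm_tau_def Let_def b_def using rec_block_entries(1)[OF M C jJ] by simp
  moreover have "bkj F P l (Suc k) j = b" unfolding bkj_def b_def J_def using k by simp
  moreover have "rkj F G P l (Suc k) j = (-1) ^ ((C - 1) * (\<Sum>i\<in>{1..<b}. i))"
    unfolding rkj_def \<open>bkj F P l (Suc k) j = b\<close> using Nbar_cols_uk k unfolding C_def M_def J_def by simp
  ultimately show ?thesis
    using rec_block_det[OF M C jJ tau minors lc] det_sres_tau_smult[OF degrees(1) jJ]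
    unfolding b_def A_def degrees(2) by simp
qed

lemma level_formula:
  "1 \<le> k \<Longrightarrow> k \<le> t \<Longrightarrow> j < degree (P k 2) \<Longrightarrow> \<tau> \<le> j \<Longrightarrow>
    det (rsm_tau F G (jseq F P l) k j \<tau>) =
    Rbar F G P l \<alpha> \<beta> (k - 1) ^ bkj F P l k j * rkj F G P l k j * det (sres_tau (P k 1) (P k 2) j \<tau>)"
proof (induction k arbitrary: j \<tau> rule: nat_induct_at_least)
  case base
  have "degree G < degree F" using level_PRS[of 1] base first_level unfolding is_PRS_def by auto
  moreover have "j < degree G" using base first_level by simp
  ultimately have "degree F + degree G - 2 * j + j - \<tau> - 1 = degree F + degree G - j - \<tau> - 1"
    by linarith
  moreover have "Nbar 1 j = sres_mat (degree F) (degree G) F G j" by (simp add: numeral_eq_Suc)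
  ultimately have "rsm_tau F G (jseq F P l) 1 j \<tau> = sres_tau (P 1 1) (P 1 2) j \<tau>"
    unfolding rsm_tau_def sres_tau_def Let_def first_level by (simp add: sres_mat_def)
  then show ?case by (simp add: bkj_def rkj_def)
next
  case (Suc k)
  then show ?case using recursion_step[of k j \<tau>] by simp
qed

end

theorem mainTheorem3:
  fixes F G :: "'a::{field_char_0,field_gcd} poly"
    and t :: nat and P :: "nat \<Rightarrow> nat \<Rightarrow> 'a poly" and l :: "nat \<Rightarrow> nat"
    and \<alpha> \<beta> :: "nat \<Rightarrow> nat \<Rightarrow> 'a"
  assumes "F \<noteq> 0" and "G \<noteq> 0"
    and "degree F > degree G" and "degree G > 0"
    and "is_complete_recursive_PRS F G t P l \<alpha> \<beta>"
    and "\<forall>k\<in>{1..<t}. l k \<ge> 3"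
    and "k \<in> {1..t}" and "j < degree (P k 2)" and "\<tau> \<le> j"
  shows "det (rsm_tau F G (jseq F P l) k j \<tau>) =
         Rbar F G P l \<alpha> \<beta> (k - 1) ^ bkj F P l k j * rkj F G P l k j *
         det (sres_tau (P k 1) (P k 2) j \<tau>)"
  using level_formula[OF assms(5,6)] assms(7-9) by auto

end
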